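(* Let ${\bf p}\in M_n(k)$ be an AST-matrix of order $m$. Then the algebra $\mathcal O_{{\bf p},{\bf 1}}(S_{mn})$ is non-zero.
   Context: $k$ is a field of characteristic zero, $m,n\ge 2$ are integers, and $\xi\in k$ is a primitive $m$-th root of unity. For $i\in\{1,\dots,mn\}$ put $i^*=\lceil i/m\rceil\in\{1,\dots,n\}$. A matrix ${\bf p}=(p_{ij})\in M_n(k)$ is an AST-matrix if $p_{ii}=1$ and $p_{ij}p_{ji}=1$ for all $i,j$; it has order $m$ if $p_{ij}^m=1$ for all $i,j$; ${\bf 1}$ denotes the AST-matrix with all entries $1$. For $i,j,k,l\in\{1,\dots,mn\}$ put $R^{lk}_{ij}({\bf p})=\delta_{i^*k^*}\delta_{j^*l^*}\sum_{r,s=0}^{m-1}\xi^{r(i-k)+s(j-l)}p_{j^*i^*}^{rs}$. For AST-matrices ${\bf p},{\bf q}$ of order $m$, $\mathcal O_{{\bf q},{\bf p}}(S_{mn})$ is the universal algebra with generators $x_{ij}$, $1\le i,j\le mn$, and relations $x_{ij}x_{ik}=\delta_{jk}x_{ij}$, $x_{ji}x_{ki}=\delta_{jk}x_{ji}$, $\sum_{l=1}^{mn}x_{il}=1=\sum_{l=1}^{mn}x_{li}$ for $1\le i,j,k\le mn$, and $\sum_{k,l}R^{lk}_{ij}({\bf p})x_{\alpha l}x_{\beta k}=\sum_{k,l}R^{\alpha\beta}_{lk}({\bf q})x_{li}x_{kj}$ for $1\le i,j,\alpha,\beta\le mn$. *)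

theory Defs
  imports Complex_Main
begin

definition AST_matrix :: "nat \<Rightarrow> (nat \<Rightarrow> nat \<Rightarrow> 'k::field) \<Rightarrow> bool" where
  "AST_matrix n p \<longleftrightarrow> (\<forall>i\<in>{1..n}. p i i = 1) \<and> (\<forall>i\<in>{1..n}. \<forall>j\<in>{1..n}. p i j * p j i = 1)"

definition AST_order :: "nat \<Rightarrow> nat \<Rightarrow> (nat \<Rightarrow> nat \<Rightarrow> 'k::field) \<Rightarrow> bool" where
  "AST_order n m p \<longleftrightarrow> (\<forall>i\<in>{1..n}. \<forall>j\<in>{1..n}. p i j ^ m = 1)"

definition one_matrix :: "nat \<Rightarrow> nat \<Rightarrow> 'k::field" where
  "one_matrix i j = 1"

definition primitive_root :: "nat \<Rightarrow> 'k::field \<Rightarrow> bool" where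
  "primitive_root m \<xi> \<longleftrightarrow> \<xi> ^ m = 1 \<and> (\<forall>r. 0 < r \<and> r < m \<longrightarrow> \<xi> ^ r \<noteq> 1)"

definition star :: "nat \<Rightarrow> nat \<Rightarrow> nat" where
  "star m i = nat \<lceil>real i / real m\<rceil>"

text \<open>Rcoef m xi p i j k l is R^{lk}_{ij}(p)\<close>
definition Rcoef :: "nat \<Rightarrow> 'k::field \<Rightarrow> (nat \<Rightarrow> nat \<Rightarrow> 'k) \<Rightarrow> nat \<Rightarrow> nat \<Rightarrow> nat \<Rightarrow> nat \<Rightarrow> 'k" where
  "Rcoef m \<xi> p i j k l =
     (if star m i = star m k \<and> star m j = star m l then
        (\<Sum>r<m. \<Sum>s<m. \<xi> powi (int r * (int i - int k) + int s * (int j - int l))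
                          * p (star m j) (star m i) ^ (r * s))
      else 0)"

text \<open>An element is a finitely supported coefficient function on words in the
  generators; only finitely supported elements are ever produced below.\<close>

type_synonym 'k fa = "(nat \<times> nat) list \<Rightarrow> 'k"

definition fa_mon :: "(nat \<times> nat) list \<Rightarrow> 'k::field fa" where
  "fa_mon u = (\<lambda>w. if w = u then 1 else 0)"

definition fa_mult :: "'k::field fa \<Rightarrow> 'k fa \<Rightarrow> 'k fa" where
  "fa_mult f g = (\<lambda>w. \<Sum>t\<le>length w. f (take t w) * g (drop t w))"

definition fa_one :: "'k::field fa" where
  "fa_one = fa_mon []"

inductive_set fa_ideal :: "'k::field fa set \<Rightarrow> 'k fa set" for S where
  zero: "(\<lambda>w. 0) \<in> fa_ideal S"
| base: "r \<in> S \<Longrightarrow> r \<in> fa_ideal S"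
| add: "a \<in> fa_ideal S \<Longrightarrow> b \<in> fa_ideal S \<Longrightarrow> (\<lambda>w. a w + b w) \<in> fa_ideal S"
| smul: "a \<in> fa_ideal S \<Longrightarrow> (\<lambda>w. c * a w) \<in> fa_ideal S"
| lmul: "a \<in> fa_ideal S \<Longrightarrow> fa_mult (fa_mon u) a \<in> fa_ideal S"
| rmul: "a \<in> fa_ideal S \<Longrightarrow> fa_mult a (fa_mon u) \<in> fa_ideal S"

definition O_relations :: "nat \<Rightarrow> nat \<Rightarrow> 'k::field \<Rightarrow> (nat \<Rightarrow> nat \<Rightarrow> 'k) \<Rightarrow> (nat \<Rightarrow> nat \<Rightarrow> 'k) \<Rightarrow> 'k fa set" where
  "O_relations m n \<xi> q p =
    (let N = m * n in
     {(\<lambda>w. fa_mon [(i,j),(i,k)] w - (if j = k then fa_mon [(i,j)] w else 0)) | i j k.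
        i \<in> {1..N} \<and> j \<in> {1..N} \<and> k \<in> {1..N}}
   \<union> {(\<lambda>w. fa_mon [(j,i),(k,i)] w - (if j = k then fa_mon [(j,i)] w else 0)) | i j k.
        i \<in> {1..N} \<and> j \<in> {1..N} \<and> k \<in> {1..N}}
   \<union> {(\<lambda>w. (\<Sum>l\<in>{1..N}. fa_mon [(i,l)] w) - fa_one w) | i. i \<in> {1..N}}
   \<union> {(\<lambda>w. (\<Sum>l\<in>{1..N}. fa_mon [(l,i)] w) - fa_one w) | i. i \<in> {1..N}}
   \<union> {(\<lambda>w. (\<Sum>k\<in>{1..N}. \<Sum>l\<in>{1..N}. Rcoef m \<xi> p i j k l * fa_mon [(\<alpha>,l),(\<beta>,k)] w)
           - (\<Sum>k\<in>{1..N}. \<Sum>l\<in>{1..N}. Rcoef m \<xi> q l k \<beta> \<alpha> * fa_mon [(l,i),(k,j)] w)) | i j \<alpha> \<beta>.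
        i \<in> {1..N} \<and> j \<in> {1..N} \<and> \<alpha> \<in> {1..N} \<and> \<beta> \<in> {1..N}})"

definition O_nonzero :: "nat \<Rightarrow> nat \<Rightarrow> 'k::field \<Rightarrow> (nat \<Rightarrow> nat \<Rightarrow> 'k) \<Rightarrow> (nat \<Rightarrow> nat \<Rightarrow> 'k) \<Rightarrow> bool" where
  "O_nonzero m n \<xi> q p \<longleftrightarrow> fa_one \<notin> fa_ideal (O_relations m n \<xi> q p)"

end

theory Submission
  imports Defs
begin

text \<open>
  The algebra is non-zero because it has a representation on a non-zero space.
  Take operators \<open>U\<^sub>1, \<dots>, U\<^sub>n\<close> with \<open>U\<^sub>a\<^sup>m = 1\<close> and
  \<open>U\<^sub>a U\<^sub>b = p\<^sub>a\<^sub>b U\<^sub>b U\<^sub>a\<close> (twisted cyclic shifts on functions of exponent vectors),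
  let \<open>P\<^sub>a(d) = (1/m) \<Sum>\<^sub>r \<xi>\<^sup>-\<^sup>r\<^sup>d U\<^sub>a\<^sup>r\<close> be the spectral projections
  of \<open>U\<^sub>a\<close>, and let \<open>x\<^sub>i\<^sub>j\<close> act as \<open>P\<^sub>i\<^sub>*(i - j)\<close> if \<open>i* = j*\<close> and
  as \<open>0\<close> otherwise. Orthogonality and completeness of the spectral projections give the
  idempotence, orthogonality and row/column sum relations. In the remaining relation the
  side with \<open>R(1)\<close> collapses to \<open>m\<^sup>2 x\<^sub>\<alpha>\<^sub>j x\<^sub>\<beta>\<^sub>i\<close>; expanding the
  projections and commuting the powers of \<open>U\<close> turns it into
  \<open>\<Sum>\<^sub>r\<^sub>,\<^sub>s \<xi>\<^sup>\<dots> p\<^sup>r\<^sup>s U\<^sub>i\<^sub>*\<^sup>r U\<^sub>j\<^sub>*\<^sup>s\<close>, and the side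
  with \<open>R(p)\<close> gives the same sum by the spectral decomposition
  \<open>U\<^sub>a\<^sup>r = \<Sum>\<^sub>d \<xi>\<^sup>r\<^sup>d P\<^sub>a(d)\<close>, read off along a block of indices.
\<close>

lemma primitive_root_nonzero:
  assumes "primitive_root m (\<xi>::'k::field)" "0 < m"
  shows "\<xi> \<noteq> 0"
  using assms unfolding primitive_root_def by (metis power_0_left zero_neq_one gr_implies_not0)

lemma primitive_root_power_int_eq_1_iff:
  assumes "primitive_root m (\<xi>::'k::field)" "0 < m"
  shows "\<xi> powi c = 1 \<longleftrightarrow> int m dvd c"
proof -
  define k where "k = nat (c mod int m)"
  have k: "int k = c mod int m" "k < m"
    using assms(2) unfolding k_def by (simp_all add: nat_less_iff)
  have "\<xi> powi c = \<xi> powi (int m * (c div int m)) * \<xi> powi int k"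
    using primitive_root_nonzero[OF assms] k(1) by (simp flip: power_int_add)
  also have "\<xi> powi (int m * (c div int m)) = 1"
    using assms(1) unfolding primitive_root_def by (simp add: power_int_mult)
  finally have "\<xi> powi c = \<xi> ^ k" by simp
  moreover have "\<xi> ^ k = 1 \<longleftrightarrow> k = 0"
    using assms(1) k(2) unfolding primitive_root_def by auto
  moreover have "k = 0 \<longleftrightarrow> int m dvd c"
    using k(1) by (auto simp: dvd_eq_mod_eq_0)
  ultimately show ?thesis by simp
qed

lemma sum_primitive_root_powers:
  assumes "primitive_root m (\<xi>::'k::field)" "0 < m"
  shows "(\<Sum>r<m. \<xi> powi (int r * c)) = (if int m dvd c then of_nat m else 0)"
proof -
  define z where "z = \<xi> powi c"
  have powers: "\<xi> powi (int r * c) = z ^ r" for r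
    unfolding z_def by (metis mult.commute power_int_mult power_int_of_nat)
  have "z ^ m = 1"
    using primitive_root_power_int_eq_1_iff[OF assms, of "int m * c"] by (simp add: powers)
  moreover have "z = 1 \<longleftrightarrow> int m dvd c"
    unfolding z_def by (rule primitive_root_power_int_eq_1_iff[OF assms])
  ultimately show ?thesis
    by (cases "z = 1") (simp_all add: powers geometric_sum)
qed

definition linear_op :: "(('g \<Rightarrow> 'k::field) \<Rightarrow> ('g \<Rightarrow> 'k)) \<Rightarrow> bool" where
  "linear_op T \<longleftrightarrow>
     (\<forall>f h. T (\<lambda>x. f x + h x) = (\<lambda>x. T f x + T h x)) \<and> (\<forall>c f. T (\<lambda>x. c * f x) = (\<lambda>x. c * T f x))"

lemma linear_op_add: "linear_op T \<Longrightarrow> T (\<lambda>x. f x + h x) = (\<lambda>x. T f x + T h x)"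
  unfolding linear_op_def by blast

lemma linear_op_scale: "linear_op T \<Longrightarrow> T (\<lambda>x. c * f x) = (\<lambda>x. c * T f x)"
  unfolding linear_op_def by blast

lemma linear_op_zero: "linear_op T \<Longrightarrow> T (\<lambda>x. 0) x = 0"
  using linear_op_scale[of T 0 "\<lambda>x. 0"] by (metis mult_zero_left)

lemma linear_op_sum:
  assumes "linear_op T" "finite A"
  shows "T (\<lambda>x. \<Sum>a\<in>A. c a * F a x) = (\<lambda>x. \<Sum>a\<in>A. c a * T (F a) x)"
  using assms(2)
proof (induction A rule: finite_induct)
  case empty
  then show ?case using linear_op_zero[OF assms(1)] by auto
next
  case (insert a A)
  then show ?case
    using linear_op_add[OF assms(1), of "\<lambda>x. c a * F a x"] linear_op_scale[OF assms(1)] by simp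
qed

lemma linear_op_comp: "linear_op S \<Longrightarrow> linear_op T \<Longrightarrow> linear_op (S \<circ> T)"
  unfolding linear_op_def by simp

lemma linear_op_id: "linear_op id"
  unfolding linear_op_def by simp

lemma linear_op_funpow: "linear_op T \<Longrightarrow> linear_op (T ^^ r)"
  by (induction r) (auto simp: linear_op_id linear_op_comp)

section \<open>Representations of the free algebra\<close>

fun word_op ::
  "(nat \<Rightarrow> nat \<Rightarrow> ('g \<Rightarrow> 'k) \<Rightarrow> ('g \<Rightarrow> 'k)) \<Rightarrow> (nat \<times> nat) list \<Rightarrow> ('g \<Rightarrow> 'k) \<Rightarrow> ('g \<Rightarrow> 'k)"
  where
    "word_op X [] = id"
  | "word_op X ((i, j) # w) = X i j \<circ> word_op X w"

lemma word_op_append: "word_op X (u @ w) = word_op X u \<circ> word_op X w"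
  by (induction X u rule: word_op.induct) auto

lemma linear_op_word_op: "(\<And>i j. linear_op (X i j)) \<Longrightarrow> linear_op (word_op X w)"
  by (induction X w rule: word_op.induct) (auto simp: linear_op_id linear_op_comp)

definition fa_supp :: "'k::field fa \<Rightarrow> (nat \<times> nat) list set" where
  "fa_supp a = {w. a w \<noteq> 0}"

text \<open>Only meaningful for finitely supported \<open>a\<close>: otherwise the sum is over an infinite
  set and hence \<open>0\<close>.\<close>

definition fa_eval ::
  "(nat \<Rightarrow> nat \<Rightarrow> ('g \<Rightarrow> 'k) \<Rightarrow> ('g \<Rightarrow> 'k)) \<Rightarrow> 'k::field fa \<Rightarrow> ('g \<Rightarrow> 'k) \<Rightarrow> 'g \<Rightarrow> 'k" where
  "fa_eval X a f x = (\<Sum>w\<in>fa_supp a. a w * word_op X w f x)"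

lemma fa_eval_superset:
  assumes "finite S" "fa_supp a \<subseteq> S"
  shows "fa_eval X a f x = (\<Sum>w\<in>S. a w * word_op X w f x)"
  unfolding fa_eval_def by (rule sum.mono_neutral_left) (use assms in \<open>auto simp: fa_supp_def\<close>)

lemma finite_fa_supp_mon [simp]: "finite (fa_supp (fa_mon u))"
  by (rule finite_subset[of _ "{u}"]) (auto simp: fa_supp_def fa_mon_def)

lemma finite_fa_supp_add [simp]:
  "finite (fa_supp a) \<Longrightarrow> finite (fa_supp b) \<Longrightarrow> finite (fa_supp (\<lambda>w. a w + b w))"
  by (rule finite_subset[of _ "fa_supp a \<union> fa_supp b"]) (auto simp: fa_supp_def)

lemma finite_fa_supp_diff [simp]:
  "finite (fa_supp a) \<Longrightarrow> finite (fa_supp b) \<Longrightarrow> finite (fa_supp (\<lambda>w. a w - b w))"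
  by (rule finite_subset[of _ "fa_supp a \<union> fa_supp b"]) (auto simp: fa_supp_def)

lemma finite_fa_supp_scale [simp]: "finite (fa_supp a) \<Longrightarrow> finite (fa_supp (\<lambda>w. c * a w))"
  by (rule finite_subset[of _ "fa_supp a"]) (auto simp: fa_supp_def)

lemma finite_fa_supp_if [simp]:
  "finite (fa_supp a) \<Longrightarrow> finite (fa_supp (\<lambda>w. if P then a w else 0))"
  by (rule finite_subset[of _ "fa_supp a"]) (auto simp: fa_supp_def)

lemma finite_fa_supp_sum [simp]:
  "finite A \<Longrightarrow> (\<And>i. i \<in> A \<Longrightarrow> finite (fa_supp (F i))) \<Longrightarrow> finite (fa_supp (\<lambda>w. \<Sum>i\<in>A. F i w))"
  by (rule finite_subset[of _ "\<Union>i\<in>A. fa_supp (F i)"]) (auto simp: fa_supp_def intro: sum.neutral)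

lemma fa_eval_mon [simp]: "fa_eval X (fa_mon u) f x = word_op X u f x"
  by (subst fa_eval_superset[of "{u}"]) (auto simp: fa_supp_def fa_mon_def)

lemma fa_eval_add [simp]:
  assumes "finite (fa_supp a)" "finite (fa_supp b)"
  shows "fa_eval X (\<lambda>w. a w + b w) f x = fa_eval X a f x + fa_eval X b f x"
  using assms
  by (subst (1 2 3) fa_eval_superset[of "fa_supp a \<union> fa_supp b"])
     (auto simp: fa_supp_def distrib_right sum.distrib)

lemma fa_eval_diff [simp]:
  assumes "finite (fa_supp a)" "finite (fa_supp b)"
  shows "fa_eval X (\<lambda>w. a w - b w) f x = fa_eval X a f x - fa_eval X b f x"
  using assms
  by (subst (1 2 3) fa_eval_superset[of "fa_supp a \<union> fa_supp b"])
     (auto simp: fa_supp_def left_diff_distrib sum_subtractf)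

lemma fa_eval_scale [simp]:
  assumes "finite (fa_supp a)"
  shows "fa_eval X (\<lambda>w. c * a w) f x = c * fa_eval X a f x"
  using assms
  by (subst (1 2) fa_eval_superset[of "fa_supp a"]) (auto simp: fa_supp_def sum_distrib_left mult.assoc)

lemma fa_eval_if [simp]:
  "finite (fa_supp a) \<Longrightarrow> fa_eval X (\<lambda>w. if P then a w else 0) f x = (if P then fa_eval X a f x else 0)"
  by (cases P) (simp_all add: fa_eval_def fa_supp_def)

lemma fa_eval_sum [simp]:
  assumes "finite A" "\<And>i. i \<in> A \<Longrightarrow> finite (fa_supp (F i))"
  shows "fa_eval X (\<lambda>w. \<Sum>i\<in>A. F i w) f x = (\<Sum>i\<in>A. fa_eval X (F i) f x)"
  using assms
proof (induction A rule: finite_induct)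
  case empty
  then show ?case by (simp add: fa_eval_def fa_supp_def)
next
  case (insert i A)
  then show ?case by simp
qed

lemma fa_mult_mon_left:
  "fa_mult (fa_mon u) a w = (if take (length u) w = u then a (drop (length u) w) else 0)"
proof -
  have "fa_mult (fa_mon u) a w
      = (\<Sum>t\<le>length w. if t = length u then (if take (length u) w = u then a (drop t w) else 0) else 0)"
    unfolding fa_mult_def fa_mon_def by (intro sum.cong refl) (auto split: if_splits)
  also have "\<dots> = (if length u \<le> length w \<and> take (length u) w = u then a (drop (length u) w) else 0)"
    by (simp add: sum.delta)
  also have "\<dots> = (if take (length u) w = u then a (drop (length u) w) else 0)"
    using length_take[of "length u" w] by (auto simp: min_def)
  finally show ?thesis .
qed

lemma fa_mult_mon_right:
  "fa_mult a (fa_mon u) w =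
     (if length u \<le> length w \<and> drop (length w - length u) w = u
      then a (take (length w - length u) w) else 0)"
proof -
  have "fa_mult a (fa_mon u) w
      = (\<Sum>t\<le>length w. if t = length w - length u then
           (if length u \<le> length w \<and> drop (length w - length u) w = u then a (take t w) else 0)
         else 0)"
    unfolding fa_mult_def fa_mon_def by (intro sum.cong refl) (auto split: if_splits)
  then show ?thesis by (simp add: sum.delta)
qed

lemma fa_supp_mult_mon_left: "fa_supp (fa_mult (fa_mon u) a) = (\<lambda>w. u @ w) ` fa_supp a"
proof (intro equalityI subsetI)
  fix w assume "w \<in> fa_supp (fa_mult (fa_mon u) a)"
  then have "take (length u) w = u" "drop (length u) w \<in> fa_supp a"
    unfolding fa_supp_def fa_mult_mon_left by (simp_all split: if_splits)
  then show "w \<in> (\<lambda>w. u @ w) ` fa_supp a"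
    by (metis append_take_drop_id image_eqI)
next
  fix w assume "w \<in> (\<lambda>w. u @ w) ` fa_supp a"
  then obtain v where "w = u @ v" "a v \<noteq> 0"
    unfolding fa_supp_def by blast
  then show "w \<in> fa_supp (fa_mult (fa_mon u) a)"
    by (simp add: fa_supp_def fa_mult_mon_left)
qed

lemma fa_supp_mult_mon_right: "fa_supp (fa_mult a (fa_mon u)) = (\<lambda>w. w @ u) ` fa_supp a"
proof (intro equalityI subsetI)
  fix w assume "w \<in> fa_supp (fa_mult a (fa_mon u))"
  then have "drop (length w - length u) w = u" "take (length w - length u) w \<in> fa_supp a"
    unfolding fa_supp_def fa_mult_mon_right by (simp_all split: if_splits)
  then show "w \<in> (\<lambda>w. w @ u) ` fa_supp a"
    by (metis append_take_drop_id image_eqI)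
next
  fix w assume "w \<in> (\<lambda>w. w @ u) ` fa_supp a"
  then obtain v where "w = v @ u" "a v \<noteq> 0"
    unfolding fa_supp_def by blast
  then show "w \<in> fa_supp (fa_mult a (fa_mon u))"
    by (simp add: fa_supp_def fa_mult_mon_right)
qed

lemma fa_eval_mult_mon_left:
  assumes "\<And>i j. linear_op (X i j)" "finite (fa_supp a)"
  shows "fa_eval X (fa_mult (fa_mon u) a) f x = word_op X u (fa_eval X a f) x"
proof -
  have "fa_eval X (fa_mult (fa_mon u) a) f x = (\<Sum>w\<in>fa_supp a. a w * word_op X (u @ w) f x)"
    unfolding fa_eval_def fa_supp_mult_mon_left
    by (subst sum.reindex) (auto simp: inj_on_def fa_mult_mon_left)
  also have "\<dots> = word_op X u (\<lambda>x. \<Sum>w\<in>fa_supp a. a w * word_op X w f x) x"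
    using linear_op_sum[OF linear_op_word_op[OF assms(1)] assms(2)] by (simp add: word_op_append)
  finally show ?thesis by (simp add: fa_eval_def[abs_def])
qed

lemma fa_eval_mult_mon_right:
  "fa_eval X (fa_mult a (fa_mon u)) f x = fa_eval X a (word_op X u f) x"
  unfolding fa_eval_def fa_supp_mult_mon_right
  by (subst sum.reindex) (auto simp: inj_on_def fa_mult_mon_right word_op_append)

lemma fa_ideal_eval_eq_0:
  assumes "\<And>i j. linear_op (X i j)"
    and "\<And>r. r \<in> S \<Longrightarrow> finite (fa_supp r) \<and> (\<forall>f x. fa_eval X r f x = 0)"
    and "a \<in> fa_ideal S"
  shows "finite (fa_supp a) \<and> (\<forall>f x. fa_eval X a f x = 0)"
  using assms(3)
proof (induction a rule: fa_ideal.induct)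
  case zero
  then show ?case by (simp add: fa_eval_def fa_supp_def)
next
  case (base r)
  then show ?case using assms(2) by blast
next
  case (lmul a u)
  then have "fa_eval X a f = (\<lambda>x. 0)" for f
    by blast
  then show ?case
    using lmul linear_op_zero[OF linear_op_word_op[OF assms(1)]]
    by (simp add: fa_supp_mult_mon_left fa_eval_mult_mon_left[OF assms(1)])
next
  case (rmul a u)
  then show ?case by (simp add: fa_supp_mult_mon_right fa_eval_mult_mon_right)
qed simp_all

lemma fa_one_notin_fa_ideal:
  assumes "\<And>i j. linear_op (X i j)"
    and "\<And>r. r \<in> S \<Longrightarrow> finite (fa_supp r) \<and> (\<forall>f x. fa_eval X r f x = 0)"
  shows "fa_one \<notin> fa_ideal S"
proof
  assume "fa_one \<in> fa_ideal S"
  then have "fa_eval X fa_one (\<lambda>x. 1) x = 0" for x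
    using fa_ideal_eval_eq_0[OF assms] by blast
  then show False by (simp add: fa_one_def)
qed

lemma sum_swap3:
  "(\<Sum>x\<in>A. \<Sum>y\<in>B. \<Sum>z\<in>C. F x y z) = (\<Sum>y\<in>B. \<Sum>z\<in>C. \<Sum>x\<in>A. F x y z)"
  by (subst sum.swap) (simp only: sum.swap[of _ _ C])

lemma int_dvd_diff_less_iff:
  assumes "a < m" "b < m"
  shows "int m dvd (int a - int b) \<longleftrightarrow> a = b"
proof -
  have "int m dvd (int a - int b) \<longleftrightarrow> int a mod int m = int b mod int m"
    by (simp add: mod_eq_dvd_iff)
  then show ?thesis using assms by simp
qed

lemma star_eq_div:
  assumes "0 < m" "1 \<le> i"
  shows "star m i = (i - 1) div m + 1"
proof -
  define q where "q = (i - 1) div m"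
  define r where "r = (i - 1) mod m"
  have i: "i = q * m + r + 1" "r < m"
    using assms by (simp_all add: q_def r_def)
  have "\<lceil>real i / real m\<rceil> = int q + 1"
  proof (rule ceiling_unique)
    have "real q * real m < real i" using i by simp
    then show "real_of_int (int q + 1) - 1 < real i / real m"
      using assms by (simp add: field_simps)
    have "real i \<le> (real q + 1) * real m" using i by (simp add: algebra_simps)
    then show "real i / real m \<le> real_of_int (int q + 1)"
      using assms by (simp add: field_simps)
  qed
  then show ?thesis unfolding star_def q_def by simp
qed

definition block_start :: "nat \<Rightarrow> nat \<Rightarrow> nat" where
  "block_start m I = (I - 1) * m + 1"

lemma star_block_start_add:
  assumes "0 < m" "1 \<le> I" "t < m"
  shows "star m (block_start m I + t) = I"
  using assms by (simp add: star_eq_div block_start_def)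

lemma block_start_star_add_mod:
  assumes "0 < m" "1 \<le> l"
  shows "block_start m (star m l) + (l - 1) mod m = l"
  using assms by (simp add: star_eq_div block_start_def)

lemma star_in_range:
  assumes "0 < m" "l \<in> {1..m * n}"
  shows "star m l \<in> {1..n}"
proof -
  have "l - 1 < n * m"
    using assms by (auto simp: mult.commute)
  then have "(l - 1) div m < n"
    by (rule less_mult_imp_div_less)
  then show ?thesis using assms by (simp add: star_eq_div)
qed

lemma same_block_dvd_diff_iff:
  assumes "0 < m" "1 \<le> j" "1 \<le> l" "star m j = star m l"
  shows "int m dvd (int j - int l) \<longleftrightarrow> j = l"
proof -
  define a where "a = (j - 1) mod m"
  define c where "c = (l - 1) mod m"
  define b where "b = block_start m (star m l)"
  have "j = b + a" "l = b + c"
    using block_start_star_add_mod[OF assms(1,2)] block_start_star_add_mod[OF assms(1,3)] assms(4)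
    by (simp_all add: a_def b_def c_def)
  then have "int j - int l = int a - int c" "j = l \<longleftrightarrow> a = c"
    by simp_all
  moreover have "a < m" "c < m"
    using assms(1) by (simp_all add: a_def c_def)
  ultimately show ?thesis
    by (simp add: int_dvd_diff_less_iff)
qed

lemma sum_over_block:
  assumes "0 < m" "I \<in> {1..n}"
  shows "(\<Sum>l\<in>{1..m * n}. if star m l = I then F l else 0) = (\<Sum>t<m. F (block_start m I + t))"
proof -
  have block: "{l \<in> {1..m * n}. star m l = I} = (\<lambda>t. block_start m I + t) ` {..<m}"
  proof (intro equalityI subsetI)
    fix l assume "l \<in> {l \<in> {1..m * n}. star m l = I}"
    then have "l = block_start m I + (l - 1) mod m"
      using block_start_star_add_mod[OF assms(1), of l] by simp
    moreover have "(l - 1) mod m \<in> {..<m}"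
      using assms(1) by simp
    ultimately show "l \<in> (\<lambda>t. block_start m I + t) ` {..<m}"
      by (rule image_eqI)
  next
    fix l assume "l \<in> (\<lambda>t. block_start m I + t) ` {..<m}"
    then obtain t where t: "t < m" "l = block_start m I + t" by auto
    have "(I - 1) * m + t + 1 \<le> I * m"
      using t(1) assms(2) by (cases I) auto
    also have "\<dots> \<le> m * n"
      using assms(2) by simp
    finally show "l \<in> {l \<in> {1..m * n}. star m l = I}"
      using t star_block_start_add[OF assms(1) _ t(1), of I] assms(2) by (simp add: block_start_def)
  qed
  have "(\<Sum>l\<in>{1..m * n}. if star m l = I then F l else 0) = sum F {l \<in> {1..m * n}. star m l = I}"
    by (rule sum.inter_filter[symmetric]) simp
  also have "\<dots> = (\<Sum>t<m. F (block_start m I + t))"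
    unfolding block by (subst sum.reindex) (auto simp: inj_on_def)
  finally show ?thesis .
qed

lemma Rcoef_one_matrix:
  assumes "primitive_root m (\<xi>::'k::field)" "0 < m" "1 \<le> i" "1 \<le> j" "1 \<le> k" "1 \<le> l"
  shows "Rcoef m \<xi> one_matrix i j k l = (if i = k \<and> j = l then of_nat m * of_nat m else 0)"
proof (cases "star m i = star m k \<and> star m j = star m l")
  case True
  have "Rcoef m \<xi> one_matrix i j k l
      = (\<Sum>r<m. \<Sum>s<m. \<xi> powi (int r * (int i - int k)) * \<xi> powi (int s * (int j - int l)))"
    unfolding Rcoef_def one_matrix_def
    using True power_int_add[OF disjI1[OF primitive_root_nonzero[OF assms(1,2)]]]
    by (simp only: simp_thms if_True power_one mult_1_right)
  also have "\<dots> = (\<Sum>r<m. \<xi> powi (int r * (int i - int k))) * (\<Sum>s<m. \<xi> powi (int s * (int j - int l)))"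
    by (simp add: sum_product)
  also have "\<dots> = (if i = k then of_nat m else 0) * (if j = l then of_nat m else 0)"
    using same_block_dvd_diff_iff[OF assms(2,3,5)] same_block_dvd_diff_iff[OF assms(2,4,6)] True
    by (simp only: sum_primitive_root_powers[OF assms(1,2)])
  finally show ?thesis by simp
next
  case False
  then have "\<not> (i = k \<and> j = l)" by auto
  then show ?thesis
    unfolding Rcoef_def using False by (simp only: if_False if_not_P)
qed

lemma sum_Rcoef_one_matrix:
  assumes "primitive_root m (\<xi>::'k::field)" "0 < m" "i \<in> {1..N}" "j \<in> {1..N}"
  shows "(\<Sum>k\<in>{1..N}. \<Sum>l\<in>{1..N}. Rcoef m \<xi> one_matrix i j k l * G k l)
       = of_nat m * of_nat m * G i j"
proof -
  have "(\<Sum>k\<in>{1..N}. \<Sum>l\<in>{1..N}. Rcoef m \<xi> one_matrix i j k l * G k l)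
      = (\<Sum>k\<in>{1..N}. \<Sum>l\<in>{1..N}. if i = k then if j = l then of_nat m * of_nat m * G k l else 0 else 0)"
    using assms(3,4) by (intro sum.cong refl) (simp add: Rcoef_one_matrix[OF assms(1,2)])
  also have "\<dots> = (\<Sum>k\<in>{1..N}. if i = k then \<Sum>l\<in>{1..N}. if j = l then of_nat m * of_nat m * G k l else 0 else 0)"
    by (intro sum.cong refl) simp
  also have "\<dots> = of_nat m * of_nat m * G i j"
    using assms(3,4) by (simp add: sum.delta')
  finally show ?thesis .
qed

section \<open>Representations from a quantum torus\<close>

locale quantum_torus_rep =
  fixes m n :: nat and \<xi> :: "'k::field_char_0" and p :: "nat \<Rightarrow> nat \<Rightarrow> 'k"
    and U :: "nat \<Rightarrow> ('g \<Rightarrow> 'k) \<Rightarrow> ('g \<Rightarrow> 'k)"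
  assumes m_pos: "0 < m"
    and primitive: "primitive_root m \<xi>"
    and linear_U: "a \<in> {1..n} \<Longrightarrow> linear_op (U a)"
    and U_power_m: "a \<in> {1..n} \<Longrightarrow> (U a ^^ m) f = f"
    and U_commute: "a \<in> {1..n} \<Longrightarrow> b \<in> {1..n} \<Longrightarrow> U a (U b f) = (\<lambda>x. p a b * U b (U a f) x)"
begin

lemma xi_power_int_add: "\<xi> powi (c + d) = \<xi> powi c * \<xi> powi d"
  using power_int_add primitive_root_nonzero[OF primitive m_pos] by blast

lemma xi_power_int_mult_m: "\<xi> powi (int m * c) = 1"
  using primitive_root_power_int_eq_1_iff[OF primitive m_pos] by simp

lemma linear_U_power: "a \<in> {1..n} \<Longrightarrow> linear_op (U a ^^ r)"
  using linear_op_funpow linear_U by blast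

lemma U_power_commute:
  assumes "a \<in> {1..n}" "b \<in> {1..n}"
  shows "(U a ^^ s) ((U b ^^ r) f) = (\<lambda>x. p a b ^ (r * s) * (U b ^^ r) ((U a ^^ s) f) x)"
proof -
  have U_commute_power: "U a ((U b ^^ r) h) = (\<lambda>x. p a b ^ r * (U b ^^ r) (U a h) x)" for h
  proof (induction r)
    case (Suc r)
    have "U a ((U b ^^ Suc r) h) = (\<lambda>x. p a b * U b (U a ((U b ^^ r) h)) x)"
      using U_commute[OF assms] by simp
    also have "\<dots> = (\<lambda>x. p a b ^ Suc r * (U b ^^ Suc r) (U a h) x)"
      unfolding Suc linear_op_scale[OF linear_U[OF assms(2)]] by (simp add: mult.assoc)
    finally show ?case .
  qed simp
  show ?thesis
  proof (induction s)
    case (Suc s)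
    have "(U a ^^ Suc s) ((U b ^^ r) f) = U a (\<lambda>x. p a b ^ (r * s) * (U b ^^ r) ((U a ^^ s) f) x)"
      using Suc by simp
    also have "\<dots> = (\<lambda>x. p a b ^ (r * Suc s) * (U b ^^ r) ((U a ^^ Suc s) f) x)"
      unfolding linear_op_scale[OF linear_U[OF assms(1)]] U_commute_power
      by (simp add: power_add mult_ac)
    finally show ?case .
  qed simp
qed

definition eigenproj :: "nat \<Rightarrow> int \<Rightarrow> ('g \<Rightarrow> 'k) \<Rightarrow> ('g \<Rightarrow> 'k)" where
  "eigenproj a d f = (\<lambda>x. \<Sum>r<m. \<xi> powi (- (int r * d)) / of_nat m * (U a ^^ r) f x)"

lemma linear_eigenproj:
  assumes "a \<in> {1..n}"
  shows "linear_op (eigenproj a d)"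
  unfolding linear_op_def eigenproj_def
  by (simp add: linear_op_add[OF linear_U_power[OF assms]] linear_op_scale[OF linear_U_power[OF assms]]
      sum.distrib distrib_left sum_distrib_left mult.left_commute)

lemma U_eigenproj:
  assumes "a \<in> {1..n}"
  shows "U a (eigenproj a d f) = (\<lambda>x. \<xi> powi d * eigenproj a d f x)"
proof
  fix x
  define H where "H r = \<xi> powi (- (int r * d)) / of_nat m * (U a ^^ r) f x" for r
  have "H m = H 0"
    using U_power_m[OF assms] xi_power_int_mult_m[of "- d"] by (simp add: H_def)
  then have shift: "(\<Sum>r<m. H (Suc r)) = (\<Sum>r<m. H r)"
    using sum.lessThan_Suc_shift[of H m] sum.lessThan_Suc[of H m] by simp
  have step: "\<xi> powi d * \<xi> powi (- (int (Suc r) * d)) = \<xi> powi (- (int r * d))" for r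
    by (subst xi_power_int_add[symmetric]) (simp add: algebra_simps)
  have "U a (eigenproj a d f) x = (\<Sum>r<m. \<xi> powi (- (int r * d)) / of_nat m * (U a ^^ Suc r) f x)"
    unfolding eigenproj_def linear_op_sum[OF linear_U[OF assms] finite_lessThan] by simp
  also have "\<dots> = (\<Sum>r<m. \<xi> powi d * H (Suc r))"
    by (intro sum.cong refl) (simp add: H_def step[symmetric] mult.assoc)
  also have "\<dots> = \<xi> powi d * (\<Sum>r<m. H r)"
    by (simp only: sum_distrib_left[symmetric] shift)
  also have "\<dots> = \<xi> powi d * eigenproj a d f x"
    by (simp add: H_def eigenproj_def)
  finally show "U a (eigenproj a d f) x = \<xi> powi d * eigenproj a d f x" .
qed

lemma U_power_eigenproj:
  assumes "a \<in> {1..n}"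
  shows "(U a ^^ r) (eigenproj a d f) = (\<lambda>x. \<xi> powi (int r * d) * eigenproj a d f x)"
proof (induction r)
  case (Suc r)
  have step: "\<xi> powi (int (Suc r) * d) = \<xi> powi d * \<xi> powi (int r * d)"
    by (subst xi_power_int_add[symmetric]) (simp add: algebra_simps)
  have "(U a ^^ Suc r) (eigenproj a d f) = U a (\<lambda>x. \<xi> powi (int r * d) * eigenproj a d f x)"
    using Suc by simp
  also have "\<dots> = (\<lambda>x. \<xi> powi (int (Suc r) * d) * eigenproj a d f x)"
    unfolding linear_op_scale[OF linear_U[OF assms]] U_eigenproj[OF assms] step
    by (simp add: mult_ac)
  finally show ?case .
qed simp

lemma eigenproj_eigenproj:
  assumes "a \<in> {1..n}"
  shows "eigenproj a d (eigenproj a e f) x = (if int m dvd (e - d) then eigenproj a e f x else 0)"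
proof -
  have step: "\<xi> powi (- (int r * d)) * \<xi> powi (int r * e) = \<xi> powi (int r * (e - d))" for r
    by (subst xi_power_int_add[symmetric]) (simp add: algebra_simps)
  have "eigenproj a d (eigenproj a e f) x
      = (\<Sum>r<m. \<xi> powi (- (int r * d)) * \<xi> powi (int r * e) / of_nat m * eigenproj a e f x)"
    unfolding eigenproj_def[of a d] U_power_eigenproj[OF assms] by (simp add: mult_ac)
  also have "\<dots> = (\<Sum>r<m. \<xi> powi (int r * (e - d))) / of_nat m * eigenproj a e f x"
    unfolding step by (simp add: sum_distrib_right sum_divide_distrib)
  finally show ?thesis
    using m_pos by (simp add: sum_primitive_root_powers[OF primitive m_pos])
qed

lemma U_power_eq_sum_eigenproj:
  assumes "a \<in> {1..n}" "r < m" "\<bar>e\<bar> = 1"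
  shows "(\<Sum>t<m. \<xi> powi (int r * (e * int t + d)) * eigenproj a (e * int t + d) f x) = (U a ^^ r) f x"
proof -
  have step: "\<xi> powi (int r * c) * \<xi> powi (- (int r' * c)) = \<xi> powi ((int r - int r') * c)"
    for r' c
    by (subst xi_power_int_add[symmetric]) (simp add: algebra_simps)
  have character_sum:
    "(\<Sum>t<m. \<xi> powi ((int r - int r') * (e * int t + d))) = (if r = r' then of_nat m else 0)"
    if "r' < m" for r'
  proof -
    have "\<xi> powi ((int r - int r') * (e * int t + d))
        = \<xi> powi (int t * ((int r - int r') * e)) * \<xi> powi ((int r - int r') * d)" for t
      by (subst xi_power_int_add[symmetric]) (simp add: algebra_simps)
    then have "(\<Sum>t<m. \<xi> powi ((int r - int r') * (e * int t + d)))
        = (\<Sum>t<m. \<xi> powi (int t * ((int r - int r') * e))) * \<xi> powi ((int r - int r') * d)"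
      by (simp add: sum_distrib_right)
    moreover have "e = 1 \<or> e = - 1"
      using assms(3) by (cases "0 \<le> e") auto
    then have "int m dvd ((int r - int r') * e) \<longleftrightarrow> r = r'"
      using int_dvd_diff_less_iff[OF assms(2) that] int_dvd_diff_less_iff[OF that assms(2)] by auto
    ultimately show ?thesis
      by (simp add: sum_primitive_root_powers[OF primitive m_pos])
  qed
  have "(\<Sum>t<m. \<xi> powi (int r * (e * int t + d)) * eigenproj a (e * int t + d) f x)
      = (\<Sum>t<m. \<Sum>r'<m. \<xi> powi (int r * (e * int t + d)) *
                        (\<xi> powi (- (int r' * (e * int t + d))) / of_nat m * (U a ^^ r') f x))"
    unfolding eigenproj_def by (simp add: sum_distrib_left)
  also have "\<dots> = (\<Sum>t<m. \<Sum>r'<m. \<xi> powi ((int r - int r') * (e * int t + d)) / of_nat m * (U a ^^ r') f x)"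
    by (intro sum.cong refl) (simp add: step[symmetric] mult_ac)
  also have "\<dots> = (\<Sum>r'<m. (\<Sum>t<m. \<xi> powi ((int r - int r') * (e * int t + d))) / of_nat m * (U a ^^ r') f x)"
    by (subst sum.swap) (simp add: sum_distrib_right sum_divide_distrib)
  also have "\<dots> = (\<Sum>r'<m. if r = r' then (U a ^^ r') f x else 0)"
    using m_pos by (intro sum.cong refl) (simp add: character_sum)
  also have "\<dots> = (U a ^^ r) f x"
    using assms(2) by simp
  finally show ?thesis .
qed

definition gen_op :: "nat \<Rightarrow> nat \<Rightarrow> ('g \<Rightarrow> 'k) \<Rightarrow> ('g \<Rightarrow> 'k)" where
  "gen_op i j =
     (if i \<in> {1..m * n} \<and> j \<in> {1..m * n} \<and> star m i = star m j
      then eigenproj (star m i) (int i - int j) else (\<lambda>f x. 0))"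

lemma gen_op_eq_eigenproj:
  "i \<in> {1..m * n} \<Longrightarrow> j \<in> {1..m * n} \<Longrightarrow> star m i = star m j \<Longrightarrow>
    gen_op i j = eigenproj (star m i) (int i - int j)"
  by (simp add: gen_op_def)

lemma gen_op_other_block: "star m i \<noteq> star m j \<Longrightarrow> gen_op i j f = (\<lambda>x. 0)"
  by (simp add: gen_op_def)

lemma linear_gen_op: "linear_op (gen_op i j)"
proof (cases "i \<in> {1..m * n} \<and> j \<in> {1..m * n} \<and> star m i = star m j")
  case True
  then show ?thesis
    using linear_eigenproj[OF star_in_range[OF m_pos]] by (simp add: gen_op_eq_eigenproj)
next
  case False
  then show ?thesis by (auto simp: gen_op_def linear_op_def)
qed

lemma gen_op_zero: "gen_op i j (\<lambda>x. 0) x = 0"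
  by (rule linear_op_zero[OF linear_gen_op])

lemma gen_op_mult_row:
  assumes "i \<in> {1..m * n}" "j \<in> {1..m * n}" "k \<in> {1..m * n}"
  shows "gen_op i j (gen_op i k f) x = (if j = k then gen_op i j f x else 0)"
proof (cases "star m j = star m i \<and> star m k = star m i")
  case True
  then have "int m dvd (int j - int k) \<longleftrightarrow> j = k"
    using assms by (intro same_block_dvd_diff_iff[OF m_pos]) auto
  then show ?thesis
    using True assms
    by (simp add: gen_op_eq_eigenproj eigenproj_eigenproj[OF star_in_range[OF m_pos assms(1)]])
next
  case False
  then show ?thesis by (auto simp: gen_op_other_block gen_op_zero)
qed

lemma gen_op_mult_col:
  assumes "i \<in> {1..m * n}" "j \<in> {1..m * n}" "k \<in> {1..m * n}"
  shows "gen_op j i (gen_op k i f) x = (if j = k then gen_op j i f x else 0)"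
proof (cases "star m j = star m i \<and> star m k = star m i")
  case True
  then have "int m dvd (int k - int j) \<longleftrightarrow> j = k"
    using assms by (subst same_block_dvd_diff_iff[OF m_pos]) auto
  then show ?thesis
    using True assms
    by (simp add: gen_op_eq_eigenproj eigenproj_eigenproj[OF star_in_range[OF m_pos assms(1)]])
next
  case False
  then show ?thesis by (auto simp: gen_op_other_block gen_op_zero)
qed

lemma sum_gen_op_row:
  assumes "i \<in> {1..m * n}" "r < m"
  shows "(\<Sum>l\<in>{1..m * n}. \<xi> powi (int r * (int i - int l)) * gen_op i l f x) = (U (star m i) ^^ r) f x"
proof -
  define I where "I = star m i"
  define d where "d = int i - int (block_start m I)"
  have I: "I \<in> {1..n}"
    unfolding I_def using star_in_range[OF m_pos assms(1)] .
  have shift: "int i - int (block_start m I + t) = - 1 * int t + d" for t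
    by (simp add: d_def)
  have "(\<Sum>l\<in>{1..m * n}. \<xi> powi (int r * (int i - int l)) * gen_op i l f x)
      = (\<Sum>l\<in>{1..m * n}. if star m l = I
           then \<xi> powi (int r * (int i - int l)) * eigenproj I (int i - int l) f x else 0)"
    using assms(1) by (intro sum.cong refl) (auto simp: I_def gen_op_eq_eigenproj gen_op_other_block)
  also have "\<dots> = (\<Sum>t<m. \<xi> powi (int r * (- 1 * int t + d)) * eigenproj I (- 1 * int t + d) f x)"
    unfolding sum_over_block[OF m_pos I] shift ..
  also have "\<dots> = (U I ^^ r) f x"
    by (rule U_power_eq_sum_eigenproj[OF I assms(2)]) simp
  finally show ?thesis unfolding I_def .
qed

lemma sum_gen_op_col:
  assumes "i \<in> {1..m * n}" "r < m"
  shows "(\<Sum>l\<in>{1..m * n}. \<xi> powi (int r * (int l - int i)) * gen_op l i f x) = (U (star m i) ^^ r) f x"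
proof -
  define I where "I = star m i"
  define d where "d = int (block_start m I) - int i"
  have I: "I \<in> {1..n}"
    unfolding I_def using star_in_range[OF m_pos assms(1)] .
  have shift: "int (block_start m I + t) - int i = 1 * int t + d" for t
    by (simp add: d_def)
  have "(\<Sum>l\<in>{1..m * n}. \<xi> powi (int r * (int l - int i)) * gen_op l i f x)
      = (\<Sum>l\<in>{1..m * n}. if star m l = I
           then \<xi> powi (int r * (int l - int i)) * eigenproj I (int l - int i) f x else 0)"
    using assms(1) by (intro sum.cong refl) (auto simp: I_def gen_op_eq_eigenproj gen_op_other_block)
  also have "\<dots> = (\<Sum>t<m. \<xi> powi (int r * (1 * int t + d)) * eigenproj I (1 * int t + d) f x)"
    unfolding sum_over_block[OF m_pos I] shift ..
  also have "\<dots> = (U I ^^ r) f x"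
    by (rule U_power_eq_sum_eigenproj[OF I assms(2)]) simp
  finally show ?thesis unfolding I_def .
qed

lemma gen_op_row_sum: "i \<in> {1..m * n} \<Longrightarrow> (\<Sum>l\<in>{1..m * n}. gen_op i l f x) = f x"
  using sum_gen_op_row[of i 0] m_pos by simp

lemma gen_op_col_sum: "i \<in> {1..m * n} \<Longrightarrow> (\<Sum>l\<in>{1..m * n}. gen_op l i f x) = f x"
  using sum_gen_op_col[of i 0] m_pos by simp

lemma eigenproj_eigenproj_expand:
  assumes "a \<in> {1..n}" "b \<in> {1..n}"
  shows "of_nat m * of_nat m * eigenproj b d (eigenproj a e f) x
       = (\<Sum>r<m. \<Sum>s<m. \<xi> powi (- (int r * e)) * \<xi> powi (- (int s * d)) * p b a ^ (r * s) *
                         (U a ^^ r) ((U b ^^ s) f) x)"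
proof -
  have cancel_m: "of_nat m * of_nat m * (A / of_nat m * (B / of_nat m * C)) = B * A * (C :: 'k)" for A B C
    using m_pos by (simp add: field_simps)
  have inner: "(U b ^^ s) (eigenproj a e f)
      = (\<lambda>x. \<Sum>r<m. \<xi> powi (- (int r * e)) / of_nat m * (U b ^^ s) ((U a ^^ r) f) x)" for s
    unfolding eigenproj_def by (rule linear_op_sum[OF linear_U_power[OF assms(2)] finite_lessThan])
  have "of_nat m * of_nat m * eigenproj b d (eigenproj a e f) x
      = of_nat m * of_nat m * (\<Sum>s<m. \<xi> powi (- (int s * d)) / of_nat m *
          (\<Sum>r<m. \<xi> powi (- (int r * e)) / of_nat m * (p b a ^ (r * s) * (U a ^^ r) ((U b ^^ s) f) x)))"
    unfolding eigenproj_def[of b d] inner U_power_commute[OF assms(2,1)] by (simp only:)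
  also have "\<dots> = (\<Sum>s<m. \<Sum>r<m. of_nat m * of_nat m * (\<xi> powi (- (int s * d)) / of_nat m *
           (\<xi> powi (- (int r * e)) / of_nat m * (p b a ^ (r * s) * (U a ^^ r) ((U b ^^ s) f) x))))"
    by (simp only: sum_distrib_left)
  also have "\<dots> = (\<Sum>s<m. \<Sum>r<m. \<xi> powi (- (int r * e)) * \<xi> powi (- (int s * d)) * p b a ^ (r * s) *
                         (U a ^^ r) ((U b ^^ s) f) x)"
    by (intro sum.cong refl) (simp only: cancel_m, simp only: mult.assoc)
  also have "\<dots> = (\<Sum>r<m. \<Sum>s<m. \<xi> powi (- (int r * e)) * \<xi> powi (- (int s * d)) * p b a ^ (r * s) *
                         (U a ^^ r) ((U b ^^ s) f) x)"
    by (rule sum.swap)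
  finally show ?thesis .
qed

lemma Rcoef_gen_op_term:
  assumes "star m \<alpha> = star m j" "star m \<beta> = star m i"
  shows "Rcoef m \<xi> p l k \<beta> \<alpha> * gen_op l i (gen_op k j f) x
       = (\<Sum>r<m. \<Sum>s<m. \<xi> powi (- (int r * (int \<beta> - int i))) * \<xi> powi (- (int s * (int \<alpha> - int j))) *
            p (star m j) (star m i) ^ (r * s) *
            (\<xi> powi (int r * (int l - int i)) * (\<xi> powi (int s * (int k - int j)) * gen_op l i (gen_op k j f) x)))"
proof (cases "star m l = star m i \<and> star m k = star m j")
  case True
  have split: "\<xi> powi (int r * (int l - int \<beta>) + int s * (int k - int \<alpha>))
      = \<xi> powi (- (int r * (int \<beta> - int i))) * \<xi> powi (- (int s * (int \<alpha> - int j))) *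
        (\<xi> powi (int r * (int l - int i)) * \<xi> powi (int s * (int k - int j)))" for r s
  proof -
    have "int r * (int l - int \<beta>) + int s * (int k - int \<alpha>)
        = (- (int r * (int \<beta> - int i)) + - (int s * (int \<alpha> - int j)))
          + (int r * (int l - int i) + int s * (int k - int j))"
      by (simp add: algebra_simps)
    then show ?thesis by (simp only: xi_power_int_add)
  qed
  have "Rcoef m \<xi> p l k \<beta> \<alpha>
      = (\<Sum>r<m. \<Sum>s<m. \<xi> powi (int r * (int l - int \<beta>) + int s * (int k - int \<alpha>)) *
                          p (star m j) (star m i) ^ (r * s))"
    using True assms by (simp add: Rcoef_def)
  then show ?thesis
    by (simp add: sum_distrib_left sum_distrib_right split mult_ac)
next
  case False
  then show ?thesis by (auto simp: gen_op_other_block gen_op_zero)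
qed

lemma sum_sum_gen_op_col:
  assumes "i \<in> {1..m * n}" "j \<in> {1..m * n}" "r < m" "s < m"
  shows "(\<Sum>k\<in>{1..m * n}. \<Sum>l\<in>{1..m * n}.
            \<xi> powi (int r * (int l - int i)) * (\<xi> powi (int s * (int k - int j)) * gen_op l i (gen_op k j f) x))
       = (U (star m i) ^^ r) ((U (star m j) ^^ s) f) x"
proof -
  have U_power_j: "(U (star m j) ^^ s) f = (\<lambda>y. \<Sum>k\<in>{1..m * n}. \<xi> powi (int s * (int k - int j)) * gen_op k j f y)"
    using sum_gen_op_col[OF assms(2,4)] by simp
  have "(\<Sum>k\<in>{1..m * n}. \<Sum>l\<in>{1..m * n}.
            \<xi> powi (int r * (int l - int i)) * (\<xi> powi (int s * (int k - int j)) * gen_op l i (gen_op k j f) x))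
      = (\<Sum>k\<in>{1..m * n}. \<xi> powi (int s * (int k - int j)) *
           (\<Sum>l\<in>{1..m * n}. \<xi> powi (int r * (int l - int i)) * gen_op l i (gen_op k j f) x))"
    by (simp add: sum_distrib_left mult.left_commute)
  also have "\<dots> = (\<Sum>k\<in>{1..m * n}. \<xi> powi (int s * (int k - int j)) * (U (star m i) ^^ r) (gen_op k j f) x)"
    unfolding sum_gen_op_col[OF assms(1,3)] ..
  also have "\<dots> = (U (star m i) ^^ r) ((U (star m j) ^^ s) f) x"
    unfolding U_power_j linear_op_sum[OF linear_U_power[OF star_in_range[OF m_pos assms(1)]] finite_atLeastAtMost]
    ..
  finally show ?thesis .
qed

lemma sum_Rcoef_gen_op:
  assumes "i \<in> {1..m * n}" "j \<in> {1..m * n}" "star m \<alpha> = star m j" "star m \<beta> = star m i"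
  shows "(\<Sum>k\<in>{1..m * n}. \<Sum>l\<in>{1..m * n}. Rcoef m \<xi> p l k \<beta> \<alpha> * gen_op l i (gen_op k j f) x)
       = (\<Sum>r<m. \<Sum>s<m. \<xi> powi (- (int r * (int \<beta> - int i))) * \<xi> powi (- (int s * (int \<alpha> - int j))) *
            p (star m j) (star m i) ^ (r * s) * (U (star m i) ^^ r) ((U (star m j) ^^ s) f) x)"
  (is "_ = (\<Sum>r<m. \<Sum>s<m. ?c r s * _)")
proof -
  let ?T = "\<lambda>r s k l. \<xi> powi (int r * (int l - int i)) *
              (\<xi> powi (int s * (int k - int j)) * gen_op l i (gen_op k j f) x)"
  have "(\<Sum>k\<in>{1..m * n}. \<Sum>l\<in>{1..m * n}. Rcoef m \<xi> p l k \<beta> \<alpha> * gen_op l i (gen_op k j f) x)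
      = (\<Sum>k\<in>{1..m * n}. \<Sum>l\<in>{1..m * n}. \<Sum>r<m. \<Sum>s<m. ?c r s * ?T r s k l)"
    by (simp only: Rcoef_gen_op_term[OF assms(3,4)])
  also have "\<dots> = (\<Sum>r<m. \<Sum>s<m. \<Sum>k\<in>{1..m * n}. \<Sum>l\<in>{1..m * n}. ?c r s * ?T r s k l)"
    by (simp only: sum_swap3[where A = "{1..m * n}" and B = "{..<m}" and C = "{..<m}"])
  also have "\<dots> = (\<Sum>r<m. \<Sum>s<m. ?c r s * (U (star m i) ^^ r) ((U (star m j) ^^ s) f) x)"
    by (intro sum.cong refl)
      (simp only: lessThan_iff sum_distrib_left[symmetric] sum_sum_gen_op_col[OF assms(1,2)])
  finally show ?thesis .
qed

lemma gen_op_R_relation: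
  assumes "i \<in> {1..m * n}" "j \<in> {1..m * n}" "\<alpha> \<in> {1..m * n}" "\<beta> \<in> {1..m * n}"
  shows "(\<Sum>k\<in>{1..m * n}. \<Sum>l\<in>{1..m * n}. Rcoef m \<xi> one_matrix i j k l * gen_op \<alpha> l (gen_op \<beta> k f) x)
       = (\<Sum>k\<in>{1..m * n}. \<Sum>l\<in>{1..m * n}. Rcoef m \<xi> p l k \<beta> \<alpha> * gen_op l i (gen_op k j f) x)"
proof (cases "star m \<alpha> = star m j \<and> star m \<beta> = star m i")
  case True
  have "(\<Sum>k\<in>{1..m * n}. \<Sum>l\<in>{1..m * n}. Rcoef m \<xi> one_matrix i j k l * gen_op \<alpha> l (gen_op \<beta> k f) x)
      = of_nat m * of_nat m * gen_op \<alpha> j (gen_op \<beta> i f) x"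
    by (rule sum_Rcoef_one_matrix[OF primitive m_pos assms(1,2)])
  also have "\<dots> = of_nat m * of_nat m *
      eigenproj (star m j) (int \<alpha> - int j) (eigenproj (star m i) (int \<beta> - int i) f) x"
    using True assms by (simp add: gen_op_eq_eigenproj)
  also have "\<dots> = (\<Sum>k\<in>{1..m * n}. \<Sum>l\<in>{1..m * n}. Rcoef m \<xi> p l k \<beta> \<alpha> * gen_op l i (gen_op k j f) x)"
    unfolding eigenproj_eigenproj_expand[OF star_in_range[OF m_pos assms(1)] star_in_range[OF m_pos assms(2)]]
      sum_Rcoef_gen_op[OF assms(1,2) conjunct1[OF True] conjunct2[OF True]] ..
  finally show ?thesis .
next
  case False
  have lhs_zero: "gen_op \<alpha> j (gen_op \<beta> i f) x = 0"
    using False by (auto simp: gen_op_other_block gen_op_zero)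
  have term_zero: "Rcoef m \<xi> p l k \<beta> \<alpha> * gen_op l i (gen_op k j f) x = 0" for k l
  proof (cases "star m l = star m i \<and> star m k = star m j")
    case True
    with False have "\<not> (star m l = star m \<beta> \<and> star m k = star m \<alpha>)"
      by auto
    then show ?thesis
      unfolding Rcoef_def by (simp only: if_not_P if_False mult_zero_left)
  next
    case False
    then show ?thesis by (auto simp: gen_op_other_block gen_op_zero)
  qed
  show ?thesis
    unfolding sum_Rcoef_one_matrix[OF primitive m_pos assms(1,2)] lhs_zero term_zero
    by simp
qed

lemma O_nonzero_one_matrix: "O_nonzero m n \<xi> p one_matrix"
  unfolding O_nonzero_def
proof (rule fa_one_notin_fa_ideal[OF linear_gen_op])
  fix r assume "r \<in> O_relations m n \<xi> p one_matrix"
  then show "finite (fa_supp r) \<and> (\<forall>f x. fa_eval gen_op r f x = 0)"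
    unfolding O_relations_def Let_def
    by (elim UnE CollectE exE conjE)
      (simp_all add: fa_one_def gen_op_mult_row gen_op_mult_col gen_op_row_sum gen_op_col_sum
        gen_op_R_relation del: One_nat_def)
qed

end

section \<open>A quantum torus of twisted shifts\<close>

text \<open>States are exponent vectors \<open>g :: nat \<Rightarrow> nat\<close>. Each exponent moves cyclically
  inside its residue block \<open>{m * q..<m * q + m}\<close>, so that the \<open>m\<close>-th power of a
  shift is the identity on all states.\<close>

definition cyclic_succ :: "nat \<Rightarrow> nat \<Rightarrow> nat" where
  "cyclic_succ m x = m * (x div m) + Suc (x mod m) mod m"

lemma funpow_cyclic_succ:
  assumes "0 < m"
  shows "(cyclic_succ m ^^ t) x = m * (x div m) + (x mod m + t) mod m"
proof (induction t)
  case (Suc t)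
  let ?q = "(x mod m + t) mod m"
  have "(m * (x div m) + ?q) div m = x div m" "(m * (x div m) + ?q) mod m = ?q"
    using assms by simp_all
  then show ?case
    using Suc by (simp add: cyclic_succ_def mod_Suc_eq)
qed simp

lemma power_cyclic_succ:
  assumes "0 < m" "(q::'a::monoid_mult) ^ m = 1"
  shows "q ^ cyclic_succ m x = q * q ^ x"
proof -
  have power_mod: "q ^ y = q ^ (y mod m)" for y
  proof -
    have "q ^ y = (q ^ m) ^ (y div m) * q ^ (y mod m)"
      by (metis div_mult_mod_eq power_add power_mult mult.commute)
    then show ?thesis using assms(2) by simp
  qed
  have "cyclic_succ m x mod m = Suc x mod m"
    by (simp add: cyclic_succ_def mod_Suc_eq)
  then have "q ^ cyclic_succ m x = q ^ Suc x"
    by (metis power_mod)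
  then show ?thesis by simp
qed

definition shift_at :: "nat \<Rightarrow> nat \<Rightarrow> (nat \<Rightarrow> nat) \<Rightarrow> (nat \<Rightarrow> nat)" where
  "shift_at m a g = g(a := cyclic_succ m (g a))"

definition weyl_coeff :: "(nat \<Rightarrow> nat \<Rightarrow> 'k::field) \<Rightarrow> nat \<Rightarrow> (nat \<Rightarrow> nat) \<Rightarrow> 'k" where
  "weyl_coeff p a g = (\<Prod>b\<in>{1..<a}. p b a ^ g b)"

definition weyl_op ::
  "nat \<Rightarrow> (nat \<Rightarrow> nat \<Rightarrow> 'k::field) \<Rightarrow> nat \<Rightarrow> ((nat \<Rightarrow> nat) \<Rightarrow> 'k) \<Rightarrow> ((nat \<Rightarrow> nat) \<Rightarrow> 'k)"
  where "weyl_op m p a f = (\<lambda>g. weyl_coeff p a g * f (shift_at m a g))"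

lemma funpow_shift_at: "(shift_at m a ^^ r) g = g(a := (cyclic_succ m ^^ r) (g a))"
proof (induction r)
  case (Suc r)
  show ?case
    unfolding funpow.simps(2) o_apply Suc.IH by (simp add: shift_at_def)
qed simp

lemma weyl_coeff_fun_upd: "\<not> (1 \<le> b \<and> b < a) \<Longrightarrow> weyl_coeff p a (g(b := y)) = weyl_coeff p a g"
  unfolding weyl_coeff_def by (intro prod.cong refl) auto

lemma weyl_coeff_shift_at:
  assumes "0 < m" "1 \<le> b" "b < a" "p b a ^ m = 1"
  shows "weyl_coeff p a (shift_at m b g) = p b a * weyl_coeff p a g"
proof -
  have b: "b \<in> {1..<a}" using assms(2,3) by simp
  have "weyl_coeff p a (shift_at m b g) = p b a ^ cyclic_succ m (g b) * (\<Prod>c\<in>{1..<a} - {b}. p c a ^ g c)"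
    unfolding weyl_coeff_def prod.remove[OF finite_atLeastLessThan b]
    by (simp add: shift_at_def)
  also have "\<dots> = p b a * weyl_coeff p a g"
    unfolding weyl_coeff_def prod.remove[OF finite_atLeastLessThan b] power_cyclic_succ[OF assms(1,4)]
    by (simp add: mult.assoc)
  finally show ?thesis .
qed

lemma funpow_weyl_op: "(weyl_op m p a ^^ r) f = (\<lambda>g. weyl_coeff p a g ^ r * f ((shift_at m a ^^ r) g))"
proof (induction r)
  case (Suc r)
  have coeff: "weyl_coeff p a (shift_at m a g) = weyl_coeff p a g" for g
    unfolding shift_at_def by (rule weyl_coeff_fun_upd) simp
  have "(weyl_op m p a ^^ Suc r) f = weyl_op m p a ((weyl_op m p a ^^ r) f)"
    by simp
  also have "\<dots> = (\<lambda>g. weyl_coeff p a g ^ Suc r * f ((shift_at m a ^^ Suc r) g))"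
    unfolding Suc weyl_op_def funpow_Suc_right o_apply coeff by (simp add: mult.assoc)
  finally show ?case .
qed simp

lemma weyl_op_commute:
  assumes "0 < m" "AST_matrix n p" "AST_order n m p" "a \<in> {1..n}" "b \<in> {1..n}"
  shows "weyl_op m p a (weyl_op m p b f) g = p a b * weyl_op m p b (weyl_op m p a f) g"
proof -
  have order: "p c d ^ m = 1" if "c \<in> {1..n}" "d \<in> {1..n}" for c d
    using assms(3) that unfolding AST_order_def by blast
  consider "a = b" | "a < b" | "b < a" by linarith
  then show ?thesis
  proof cases
    case 1
    then show ?thesis using assms(2,4) unfolding AST_matrix_def by simp
  next
    case 2
    then have "shift_at m a (shift_at m b g) = shift_at m b (shift_at m a g)"
      by (simp add: shift_at_def fun_upd_twist)
    moreover have "weyl_coeff p b (shift_at m a g) = p a b * weyl_coeff p b g"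
      using 2 assms(4,5) by (intro weyl_coeff_shift_at[OF assms(1)] order) auto
    moreover have "weyl_coeff p a (shift_at m b g) = weyl_coeff p a g"
      using 2 unfolding shift_at_def by (intro weyl_coeff_fun_upd) simp
    ultimately show ?thesis
      by (simp add: weyl_op_def mult_ac)
  next
    case 3
    then have "shift_at m a (shift_at m b g) = shift_at m b (shift_at m a g)"
      by (simp add: shift_at_def fun_upd_twist)
    moreover have "weyl_coeff p a (shift_at m b g) = p b a * weyl_coeff p a g"
      using 3 assms(4,5) by (intro weyl_coeff_shift_at[OF assms(1)] order) auto
    moreover have "weyl_coeff p b (shift_at m a g) = weyl_coeff p b g"
      using 3 unfolding shift_at_def by (intro weyl_coeff_fun_upd) simp
    moreover have "p a b * p b a = 1"
      using assms(2,4,5) unfolding AST_matrix_def by blast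
    ultimately show ?thesis
      by (simp add: weyl_op_def)
  qed
qed

lemma quantum_torus_rep_weyl_op:
  assumes "0 < m" "primitive_root m (\<xi>::'k::field_char_0)" "AST_matrix n p" "AST_order n m p"
  shows "quantum_torus_rep m n \<xi> p (weyl_op m p)"
proof
  fix a f assume a: "a \<in> {1..n}"
  have "weyl_coeff p a g ^ m = 1" for g
  proof -
    have "weyl_coeff p a g ^ m = (\<Prod>b\<in>{1..<a}. (p b a ^ m) ^ g b)"
      unfolding weyl_coeff_def prod_power_distrib
      by (intro prod.cong refl) (simp add: mult.commute flip: power_mult)
    also have "\<dots> = 1"
      using assms(4) a unfolding AST_order_def by (intro prod.neutral) auto
    finally show ?thesis .
  qed
  then show "(weyl_op m p a ^^ m) f = f"
    by (simp add: funpow_weyl_op funpow_shift_at funpow_cyclic_succ[OF assms(1)])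
  show "linear_op (weyl_op m p a)"
    unfolding linear_op_def weyl_op_def by (simp add: distrib_left mult.left_commute)
next
  fix a b f assume "a \<in> {1..n}" "b \<in> {1..n}"
  then show "weyl_op m p a (weyl_op m p b f) = (\<lambda>g. p a b * weyl_op m p b (weyl_op m p a f) g)"
    using weyl_op_commute[OF assms(1,3,4)] by blast
qed (use assms in auto)

theorem lemma2p3:
  fixes p :: "nat \<Rightarrow> nat \<Rightarrow> 'k::field_char_0" and \<xi> :: 'k and m n :: nat
  assumes "m \<ge> 2" and "n \<ge> 2"
    and "primitive_root m \<xi>"
    and "AST_matrix n p" and "AST_order n m p"
  shows "O_nonzero m n \<xi> p one_matrix"
proof -
  interpret quantum_torus_rep m n \<xi> p "weyl_op m p"
    using assms by (intro quantum_torus_rep_weyl_op) auto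
  show ?thesis by (rule O_nonzero_one_matrix)
qed

end
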